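(* In the quantum switch model of the context (with $W=\infty$), suppose the entanglement swapping success probability is $q=1$ and $(\lambda_{ij}+\epsilon)_{i,j\in\mathcal K}\in\Lambda$ for some $\epsilon>0$. Then the quantum switch is stable under any on-demand protocol $\pi_{\mathrm{od}}$.
   Context: Quantum switch model. There are $K$ end nodes $\mathcal K=\{1,\dots,K\}$ and a switch (node $0$); time is slotted, $t=0,1,2,\dots$; pair-indexed quantities are symmetric in $(i,j)$. In slot $t$: (i) $C_{0i}(t)\in\{0,1\}$ EPR pairs are generated between the switch and node $i$, where $\{C_{0i}(t)\}_{t\ge0}$ are mutually independent Bernoulli processes (i.i.d. in $t$) with mean $p_i$. (ii) The switch chooses nonnegative integers $F_{ij}(t)=F_{ji}(t)$ (entanglement swaps for pair $(i,j)$, each consuming one stored switch–$i$ and one stored switch–$j$ pair) with $\sum_iF_{ij}(t)\le E_{0j}(t)$; no limit on swaps per slot ($W=\infty$); each swap succeeds independently with probability $q$; $R_{ij}(t)$ is the number of successes. (iii) $A_{ij}(t)\in\mathbb N$ new requests for pair $(i,j)$ arrive. Dynamics: $U_{ij}(t+1)=[U_{ij}(t)-E_{ij}(t)-R_{ij}(t)]^++A_{ij}(t)$, $E_{ij}(t+1)=[E_{ij}(t)+R_{ij}(t)-U_{ij}(t)]^+$, $E_{0i}(t+1)=E_{0i}(t)-\sum_jF_{ij}(t)+C_{0i}(t)$, with zero initial values; $U_{ij}$ = pending requests, $E_{ij}$ = stored $i$–$j$ pairs, $E_{0i}$ = stored switch–$i$ pairs; memory unlimited, no decoherence. Requests: $\{A_{ij}(t)\}_t$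 mutually independent across pairs, each stationary ergodic with rate $\lambda_{ij}$ (so $\frac1t\sum_{\tau<t}A_{ij}(\tau)\to\lambda_{ij}$ a.s.), and $\mathbb E[A_{ij}(t)^2\mid H(t)=h]\le A_{\max}^2$ for every $t,i,j$ and realization $h$ of the history $H(t)=(E_{ij}(\tau),U_{ij}(\tau),A_{ij}(\tau),R_{ij}(\tau),C_{0i}(\tau))_{\tau=0}^{t-1}$. Stability: for all $i,j$, $\limsup_{t\to\infty}\frac1t\sum_{\tau=0}^{t-1}\mathbb P[U_{ij}(\tau)>V]\to0$ as $V\to\infty$. $\Lambda$ is the set of nonnegative matrices $(\lambda_{ij})$ for which there exist nonnegative $f_{ij}=f_{ji}$ with $\sum_if_{ij}\le p_j$ for all $j$ and $\lambda_{ij}\le qf_{ij}$ for all $i,j$. On-demand protocols: a protocol is on-demand if in every slot $t$ its choices $F_{ij}=F_{ij}(t)$ satisfy $\sum_{i\in\mathcal K}F_{ij}\le E_{0j}(t)$ for all $j$; $F_{ij}\le U_{ij}(t)$ for all $i,j$; $F_{ij}=F_{ji}\in\mathbb N$; and $\big(E_{0i}(t)-\sum_kF_{ik}\big)\big(E_{0j}(t)-\sum_kF_{kj}\big)\big(U_{ij}(t)-F_{ij}\big)=0$ for all $i,j$ (any choice satisfying these may be used). *)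

theory Defs
  imports "HOL-Probability.Probability"
begin

definition nodes :: "nat \<Rightarrow> nat set" where
  "nodes K = {1..K}"

text \<open>Unordered pairs of distinct end nodes, represented by (i,j) with i < j.\<close>
definition node_pairs :: "nat \<Rightarrow> (nat \<times> nat) set" where
  "node_pairs K = {(i,j). i \<in> nodes K \<and> j \<in> nodes K \<and> i < j}"

text \<open>Inputs: arrivals a t i j, generations c t i, swaps f t i j.
  Since q = 1 every swap succeeds, so R_ij(t) = F_ij(t). Natural-number subtraction realises the positive part.\<close>
primrec qstate ::
  "nat \<Rightarrow> (nat \<Rightarrow> nat \<Rightarrow> nat \<Rightarrow> nat) \<Rightarrow> (nat \<Rightarrow> nat \<Rightarrow> nat) \<Rightarrow> (nat \<Rightarrow> nat \<Rightarrow> nat \<Rightarrow> nat)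
   \<Rightarrow> nat \<Rightarrow> (nat \<Rightarrow> nat \<Rightarrow> nat) \<times> (nat \<Rightarrow> nat \<Rightarrow> nat) \<times> (nat \<Rightarrow> nat)" where
  "qstate K a c f 0 = ((\<lambda>i j. 0), (\<lambda>i j. 0), (\<lambda>i. 0))"
| "qstate K a c f (Suc t) =
     (case qstate K a c f t of (U, E, E0) \<Rightarrow>
       ((\<lambda>i j. (U i j - E i j - f t i j) + a t i j),
        (\<lambda>i j. (E i j + f t i j) - U i j),
        (\<lambda>i. E0 i - (\<Sum>j\<in>nodes K - {i}. f t i j) + c t i)))"

definition Uq where "Uq K a c f t = fst (qstate K a c f t)"
definition Eq where "Eq K a c f t = fst (snd (qstate K a c f t))"
definition E0q where "E0q K a c f t = snd (snd (qstate K a c f t))"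

definition on_demand :: "nat \<Rightarrow> (nat \<Rightarrow> nat \<Rightarrow> nat) \<Rightarrow> (nat \<Rightarrow> nat) \<Rightarrow> (nat \<Rightarrow> nat \<Rightarrow> nat) \<Rightarrow> bool" where
  "on_demand K U E0 Fm \<longleftrightarrow>
     (\<forall>j\<in>nodes K. (\<Sum>i\<in>nodes K - {j}. Fm i j) \<le> E0 j) \<and>
     (\<forall>i\<in>nodes K. \<forall>j\<in>nodes K. i \<noteq> j \<longrightarrow>
        Fm i j \<le> U i j \<and> Fm i j = Fm j i \<and>
        (E0 i - (\<Sum>k\<in>nodes K - {i}. Fm i k)) * (E0 j - (\<Sum>k\<in>nodes K - {j}. Fm k j))
          * (U i j - Fm i j) = 0)"

definition capacity_region :: "nat \<Rightarrow> (nat \<Rightarrow> real) \<Rightarrow> real \<Rightarrow> (nat \<Rightarrow> nat \<Rightarrow> real) \<Rightarrow> bool" where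
  "capacity_region K p q lam \<longleftrightarrow>
     (\<forall>i\<in>nodes K. \<forall>j\<in>nodes K. i \<noteq> j \<longrightarrow> lam i j \<ge> 0) \<and>
     (\<exists>f :: nat \<Rightarrow> nat \<Rightarrow> real.
        (\<forall>i j. f i j = f j i \<and> f i j \<ge> 0) \<and>
        (\<forall>j\<in>nodes K. (\<Sum>i\<in>nodes K - {j}. f i j) \<le> p j) \<and>
        (\<forall>i\<in>nodes K. \<forall>j\<in>nodes K. i \<noteq> j \<longrightarrow> lam i j \<le> q * f i j))"

definition seq_space :: "(nat \<Rightarrow> nat) measure" where
  "seq_space = Pi\<^sub>M UNIV (\<lambda>_. count_space UNIV)"

definition proc_law :: "'a measure \<Rightarrow> (nat \<Rightarrow> 'a \<Rightarrow> nat) \<Rightarrow> (nat \<Rightarrow> nat) measure" where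
  "proc_law M X = distr M seq_space (\<lambda>\<omega> t. X t \<omega>)"

definition stationary_proc :: "'a measure \<Rightarrow> (nat \<Rightarrow> 'a \<Rightarrow> nat) \<Rightarrow> bool" where
  "stationary_proc M X \<longleftrightarrow> proc_law M (\<lambda>t. X (Suc t)) = proc_law M X"

definition ergodic_proc :: "'a measure \<Rightarrow> (nat \<Rightarrow> 'a \<Rightarrow> nat) \<Rightarrow> bool" where
  "ergodic_proc M X \<longleftrightarrow>
     (\<forall>S\<in>sets seq_space. (\<lambda>x t. x (Suc t)) -` S \<inter> space seq_space = S \<longrightarrow>
        emeasure (proc_law M X) S = 0 \<or> emeasure (proc_law M X) S = 1)"

text \<open>History sigma-algebra H(t): generated by arrivals and generations before slot t
  (E, U, R are functions of these, given the history-adapted protocol and q = 1).\<close>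
definition hist_alg ::
  "'a measure \<Rightarrow> nat \<Rightarrow> (nat \<Rightarrow> nat \<Rightarrow> nat \<Rightarrow> 'a \<Rightarrow> nat) \<Rightarrow> (nat \<Rightarrow> nat \<Rightarrow> 'a \<Rightarrow> nat) \<Rightarrow> nat \<Rightarrow> 'a measure" where
  "hist_alg M K A C t = sigma (space M)
     ({A \<tau> i j -` B \<inter> space M | \<tau> i j B. \<tau> < t \<and> i \<in> nodes K \<and> j \<in> nodes K}
      \<union> {C \<tau> i -` B \<inter> space M | \<tau> i B. \<tau> < t \<and> i \<in> nodes K})"

definition all_procs ::
  "(nat \<Rightarrow> nat \<Rightarrow> nat \<Rightarrow> 'a \<Rightarrow> nat) \<Rightarrow> (nat \<Rightarrow> nat \<Rightarrow> 'a \<Rightarrow> nat) \<Rightarrow> (nat \<times> nat) + nat \<Rightarrow> 'a \<Rightarrow> nat \<Rightarrow> nat" where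
  "all_procs A C x \<omega> t = (case x of Inl (i, j) \<Rightarrow> A t i j \<omega> | Inr i \<Rightarrow> C t i \<omega>)"

definition switch_stable :: "'a measure \<Rightarrow> nat \<Rightarrow> (nat \<Rightarrow> nat \<Rightarrow> nat \<Rightarrow> 'a \<Rightarrow> nat) \<Rightarrow> bool" where
  "switch_stable M K U \<longleftrightarrow>
     (\<forall>i\<in>nodes K. \<forall>j\<in>nodes K. i \<noteq> j \<longrightarrow>
        ((\<lambda>V::real. limsup (\<lambda>t::nat. ereal ((\<Sum>\<tau><t. measure M {\<omega>\<in>space M. real (U \<tau> i j \<omega>) > V}) / real t)))
          \<longlongrightarrow> 0) at_top)"

end

theory Submission
  imports Defs
begin

text \<open>Under an on-demand protocol no end-to-end pair is ever stored, the backlog U_ij equals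
  the i-j requests minus the swaps so far, and the stock E_0i equals the generated switch-i
  pairs minus the swaps so far. So as long as the pairs generated at i and at j cover all
  requests involving the respective node, a request still pending after the swaps would leave
  both stocks positive, which the on-demand condition forbids; hence U_ij(t+1) = A_ij(t).
  By the capacity condition the request rate at every node is below its generation rate, so
  by the arrival rates and Chebyshev's inequality for the Bernoulli generations the covering
  fails with vanishing probability. Therefore P(U_ij(t+1) > V) \<le> A_max^2/V^2 + o(1), the
  Cesaro limsup of these probabilities is at most A_max^2/V^2, and this vanishes as V grows.\<close>

section \<open>Pathwise dynamics under an on-demand protocol\<close>

lemma qstate_simps:
  "Uq K a c f 0 = (\<lambda>i j. 0)" "Eq K a c f 0 = (\<lambda>i j. 0)" "E0q K a c f 0 = (\<lambda>i. 0)"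
  "Uq K a c f (Suc t) = (\<lambda>i j. (Uq K a c f t i j - Eq K a c f t i j - f t i j) + a t i j)"
  "Eq K a c f (Suc t) = (\<lambda>i j. (Eq K a c f t i j + f t i j) - Uq K a c f t i j)"
  "E0q K a c f (Suc t) = (\<lambda>i. E0q K a c f t i - (\<Sum>j\<in>nodes K - {i}. f t i j) + c t i)"
  by (simp_all add: Uq_def Eq_def E0q_def split: prod.split)

lemma finite_nodes [simp]: "finite (nodes K)"
  by (simp add: nodes_def)

lemma on_demand_sum_le:
  assumes "on_demand K U E0 Fm" "i \<in> nodes K"
  shows "(\<Sum>k\<in>nodes K - {i}. Fm i k) \<le> E0 i"
proof -
  have "(\<Sum>k\<in>nodes K - {i}. Fm i k) = (\<Sum>k\<in>nodes K - {i}. Fm k i)"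
    using assms unfolding on_demand_def by (intro sum.cong) auto
  also have "\<dots> \<le> E0 i"
    using assms unfolding on_demand_def by auto
  finally show ?thesis .
qed

lemma on_demand_Eq_zero_Uq_eq:
  assumes od: "\<And>t. on_demand K (Uq K a c f t) (E0q K a c f t) (f t)"
    and ik: "i \<in> nodes K" "k \<in> nodes K" "i \<noteq> k"
  shows "Eq K a c f t i k = 0 \<and> int (Uq K a c f t i k) = (\<Sum>\<tau><t. int (a \<tau> i k) - int (f \<tau> i k))"
proof (induction t)
  case 0
  show ?case by (simp add: qstate_simps)
next
  case (Suc t)
  have "f t i k \<le> Uq K a c f t i k"
    using od[of t] ik unfolding on_demand_def by auto
  with Suc show ?case by (simp add: qstate_simps of_nat_diff)
qed

lemma on_demand_E0q_eq:
  assumes od: "\<And>t. on_demand K (Uq K a c f t) (E0q K a c f t) (f t)"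
    and i: "i \<in> nodes K"
  shows "int (E0q K a c f t i) = (\<Sum>\<tau><t. int (c \<tau> i) - (\<Sum>k\<in>nodes K - {i}. int (f \<tau> i k)))"
proof (induction t)
  case 0
  show ?case by (simp add: qstate_simps)
next
  case (Suc t)
  with on_demand_sum_le[OF od i, of t] show ?case
    by (simp add: qstate_simps of_nat_diff flip: of_nat_sum)
qed

definition demand_covered ::
    "nat \<Rightarrow> (nat \<Rightarrow> nat \<Rightarrow> nat \<Rightarrow> nat) \<Rightarrow> (nat \<Rightarrow> nat \<Rightarrow> nat) \<Rightarrow> nat \<Rightarrow> nat \<Rightarrow> bool"
  where "demand_covered K a c t i \<longleftrightarrow> (\<Sum>\<tau><t. \<Sum>k\<in>nodes K - {i}. a \<tau> i k) \<le> (\<Sum>\<tau><t. c \<tau> i)"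

lemma demand_covered_iff_real:
  "demand_covered K a c t i \<longleftrightarrow>
     (\<Sum>\<tau><t. \<Sum>k\<in>nodes K - {i}. real (a \<tau> i k)) \<le> (\<Sum>\<tau><t. real (c \<tau> i))"
  unfolding demand_covered_def by (simp flip: of_nat_sum)

lemma on_demand_swaps_less_E0q:
  assumes od: "\<And>t. on_demand K (Uq K a c f t) (E0q K a c f t) (f t)"
    and i: "i \<in> nodes K" and cov: "demand_covered K a c t i"
    and k: "k \<in> nodes K - {i}" and unserved: "f t i k < Uq K a c f t i k"
  shows "(\<Sum>k\<in>nodes K - {i}. f t i k) < E0q K a c f t i"
proof -
  have "f t i k \<le> Uq K a c f t i k" if "k \<in> nodes K - {i}" for k
    using od[of t] that i unfolding on_demand_def by auto
  with k unserved have "(\<Sum>k\<in>nodes K - {i}. f t i k) < (\<Sum>k\<in>nodes K - {i}. Uq K a c f t i k)"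
    by (intro sum_strict_mono_ex1) auto
  then have "int (\<Sum>k\<in>nodes K - {i}. f t i k) < (\<Sum>k\<in>nodes K - {i}. int (Uq K a c f t i k))"
    by (simp flip: of_nat_sum)
  also have "\<dots> = (\<Sum>k\<in>nodes K - {i}. \<Sum>\<tau><t. int (a \<tau> i k) - int (f \<tau> i k))"
    using on_demand_Eq_zero_Uq_eq[OF od i] by (intro sum.cong) auto
  also have "\<dots> = (\<Sum>\<tau><t. \<Sum>k\<in>nodes K - {i}. int (a \<tau> i k)) - (\<Sum>\<tau><t. \<Sum>k\<in>nodes K - {i}. int (f \<tau> i k))"
    by (subst sum.swap) (simp add: sum_subtractf)
  also have "\<dots> \<le> (\<Sum>\<tau><t. int (c \<tau> i)) - (\<Sum>\<tau><t. \<Sum>k\<in>nodes K - {i}. int (f \<tau> i k))"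
    using cov unfolding demand_covered_def by (simp flip: of_nat_sum)
  also have "\<dots> = int (E0q K a c f t i)"
    using on_demand_E0q_eq[OF od i] by (simp add: sum_subtractf)
  finally show ?thesis by linarith
qed

lemma on_demand_Uq_Suc_eq_arrivals:
  assumes od: "\<And>t. on_demand K (Uq K a c f t) (E0q K a c f t) (f t)"
    and a_sym: "\<And>t i j. a t i j = a t j i"
    and ij: "i \<in> nodes K" "j \<in> nodes K" "i \<noteq> j"
    and cov: "demand_covered K a c t i" "demand_covered K a c t j"
  shows "Uq K a c f (Suc t) i j = a t i j"
proof (rule ccontr)
  assume "Uq K a c f (Suc t) i j \<noteq> a t i j"
  moreover have "f t i j \<le> Uq K a c f t i j"
    using od[of t] ij unfolding on_demand_def by auto
  ultimately have unserved: "f t i j < Uq K a c f t i j"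
    using on_demand_Eq_zero_Uq_eq[OF od ij] by (auto simp: qstate_simps)
  have f_sym: "f \<tau> i j = f \<tau> j i" for \<tau>
    using od[of \<tau>] ij unfolding on_demand_def by auto
  have "int (Uq K a c f t j i) = int (Uq K a c f t i j)"
    using on_demand_Eq_zero_Uq_eq[OF od] ij by (simp add: a_sym f_sym)
  with unserved have unserved': "f t j i < Uq K a c f t j i"
    by (simp add: f_sym)
  have left_i: "(\<Sum>k\<in>nodes K - {i}. f t i k) < E0q K a c f t i"
    using on_demand_swaps_less_E0q[OF od ij(1) cov(1) _ unserved] ij by auto
  have "(\<Sum>k\<in>nodes K - {j}. f t k j) = (\<Sum>k\<in>nodes K - {j}. f t j k)"
    using od[of t] ij unfolding on_demand_def by (intro sum.cong) auto
  with on_demand_swaps_less_E0q[OF od ij(2) cov(2) _ unserved'] ij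
  have left_j: "(\<Sum>k\<in>nodes K - {j}. f t k j) < E0q K a c f t j"
    by auto
  have "(E0q K a c f t i - (\<Sum>k\<in>nodes K - {i}. f t i k)) * (E0q K a c f t j - (\<Sum>k\<in>nodes K - {j}. f t k j))
      * (Uq K a c f t i j - f t i j) = 0"
    using od[of t] ij unfolding on_demand_def by blast
  with left_i left_j unserved show False
    by simp
qed

section \<open>Cesaro means\<close>

lemma Cesaro_mean_tendsto_0:
  fixes h :: "nat \<Rightarrow> real"
  assumes h: "h \<longlonglongrightarrow> 0"
  shows "(\<lambda>t. (\<Sum>\<tau><t. h \<tau>) / real t) \<longlonglongrightarrow> 0"
proof (rule LIMSEQ_I)
  fix e :: real assume e: "0 < e"
  obtain T where T: "\<And>t. t \<ge> T \<Longrightarrow> \<bar>h t\<bar> < e / 2"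
    using LIMSEQ_D[OF h, of "e / 2"] e by auto
  define S where "S = (\<Sum>\<tau><T. \<bar>h \<tau>\<bar>)"
  obtain N where N: "2 * S / e < real N"
    using reals_Archimedean2 by blast
  have "\<bar>(\<Sum>\<tau><t. h \<tau>) / real t\<bar> < e" if t: "t \<ge> max T (max N 1)" for t
  proof -
    have "\<bar>\<Sum>\<tau><t. h \<tau>\<bar> \<le> (\<Sum>\<tau><T. \<bar>h \<tau>\<bar>) + (\<Sum>\<tau>\<in>{T..<t}. \<bar>h \<tau>\<bar>)"
      using t sum.atLeastLessThan_concat[of 0 T t "\<lambda>\<tau>. \<bar>h \<tau>\<bar>"]
      by (simp add: atLeast0LessThan sum_abs)
    also have "\<dots> \<le> S + (\<Sum>\<tau>\<in>{T..<t}. e / 2)"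
      unfolding S_def using T by (intro add_left_mono sum_mono less_imp_le) auto
    also have "\<dots> \<le> S + real t * (e / 2)"
      using e by simp
    finally have "\<bar>\<Sum>\<tau><t. h \<tau>\<bar> \<le> S + real t * (e / 2)" .
    moreover have "2 * S / e < real t"
      using N t of_nat_mono[of N t] by linarith
    then have "S < real t * (e / 2)"
      using e by (simp add: field_simps)
    ultimately show ?thesis
      using t by (simp add: field_simps)
  qed
  then show "\<exists>no. \<forall>t\<ge>no. norm ((\<Sum>\<tau><t. h \<tau>) / real t - 0) < e"
    by (metis real_norm_def diff_zero)
qed

lemma limsup_Cesaro_mean_le:
  fixes g h :: "nat \<Rightarrow> real"
  assumes g_nonneg: "\<And>\<tau>. 0 \<le> g \<tau>" and g_Suc: "\<And>\<tau>. g (Suc \<tau>) \<le> c + h \<tau>"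
    and h: "h \<longlonglongrightarrow> 0"
  shows "limsup (\<lambda>t. ereal ((\<Sum>\<tau><t. g \<tau>) / real t)) \<le> ereal c"
proof -
  have sum_le: "(\<Sum>\<tau><t. g \<tau>) \<le> g 0 + (\<Sum>\<tau><t. c + h \<tau>)" for t
  proof (cases t)
    case (Suc m)
    have "(\<Sum>\<tau><t. g \<tau>) = g 0 + (\<Sum>\<tau><m. g (Suc \<tau>))"
      by (simp only: Suc sum.lessThan_Suc_shift)
    also have "\<dots> \<le> g 0 + (\<Sum>\<tau><m. c + h \<tau>)"
      by (intro add_left_mono sum_mono g_Suc)
    also have "\<dots> \<le> g 0 + (\<Sum>\<tau><t. c + h \<tau>)"
      using Suc g_nonneg[of "Suc m"] g_Suc[of m] by simp
    finally show ?thesis .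
  qed (simp add: g_nonneg)
  have bound: "(\<Sum>\<tau><t. g \<tau>) / real t \<le> g 0 / real t + c + (\<Sum>\<tau><t. h \<tau>) / real t"
    if "t > 0" for t
    using sum_le[of t] that by (simp add: sum.distrib field_simps)
  have "(\<lambda>t. g 0 / real t + c + (\<Sum>\<tau><t. h \<tau>) / real t) \<longlonglongrightarrow> 0 + c + 0"
    by (intro tendsto_add lim_const_over_n tendsto_const Cesaro_mean_tendsto_0 h)
  then have lim: "(\<lambda>t. ereal (g 0 / real t + c + (\<Sum>\<tau><t. h \<tau>) / real t)) \<longlonglongrightarrow> ereal c"
    by (simp add: tendsto_ereal)
  have "limsup (\<lambda>t. ereal ((\<Sum>\<tau><t. g \<tau>) / real t))
      \<le> limsup (\<lambda>t. ereal (g 0 / real t + c + (\<Sum>\<tau><t. h \<tau>) / real t))"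
    by (intro Limsup_mono eventually_mono[OF eventually_gt_at_top[of 0]]) (simp add: bound)
  also have "\<dots> = ereal c"
    by (rule lim_imp_Limsup[OF _ lim]) simp
  finally show ?thesis .
qed

section \<open>Deviation estimates\<close>

lemma (in prob_space) prob_tendsto_0_if_AE_eventually:
  assumes ae: "AE \<omega> in M. eventually (\<lambda>t. P t \<omega>) sequentially"
    and meas: "\<And>t. {\<omega>\<in>space M. \<not> P t \<omega>} \<in> events"
  shows "(\<lambda>t. prob {\<omega>\<in>space M. \<not> P t \<omega>}) \<longlonglongrightarrow> 0"
proof -
  let ?s = "\<lambda>t. indicator {\<omega>\<in>space M. \<not> P t \<omega>} :: 'a \<Rightarrow> real"
  have "(\<lambda>t. expectation (?s t)) \<longlonglongrightarrow> expectation (\<lambda>_. 0)"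
  proof (rule integral_dominated_convergence[where w="\<lambda>_. 1"])
    show "AE \<omega> in M. (\<lambda>t. ?s t \<omega>) \<longlonglongrightarrow> 0"
      using ae by eventually_elim
        (auto intro!: tendsto_eventually elim!: eventually_mono simp: indicator_def)
  qed (use meas in \<open>auto simp: indicator_def\<close>)
  then show ?thesis
    using meas by simp
qed

lemma (in prob_space) expectation_square_sum_indep_le:
  fixes Y :: "nat \<Rightarrow> 'a \<Rightarrow> real"
  assumes meas: "\<And>t. random_variable borel (Y t)"
    and bound: "\<And>t \<omega>. \<omega> \<in> space M \<Longrightarrow> \<bar>Y t \<omega>\<bar> \<le> 1"
    and centered: "\<And>t. expectation (Y t) = 0"
    and indep: "indep_vars (\<lambda>_. borel) Y UNIV"
  shows "expectation (\<lambda>\<omega>. (\<Sum>\<tau><t. Y \<tau> \<omega>)\<^sup>2) \<le> real t"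
proof -
  have int: "integrable M (Y s)" for s
    using bound by (intro integrable_const_bound[where B=1]) (auto simp: meas)
  have int_prod: "integrable M (\<lambda>\<omega>. Y s \<omega> * Y u \<omega>)" for s u
    using bound meas
    by (intro integrable_const_bound[where B=1]) (auto simp: abs_mult intro!: mult_le_one)
  have uncorrelated: "expectation (\<lambda>\<omega>. Y s \<omega> * Y u \<omega>) = 0" if "s \<noteq> u" for s u
  proof -
    have "indep_vars (\<lambda>_. borel) Y (insert s {u})"
      by (rule indep_vars_subset[OF indep]) auto
    from indep_vars_sum[OF _ _ this] that have "indep_var borel (Y s) borel (Y u)"
      by simp
    from indep_var_lebesgue_integral[OF this int int] show ?thesis
      by (simp add: centered)
  qed
  have "expectation (\<lambda>\<omega>. (\<Sum>\<tau><t. Y \<tau> \<omega>)\<^sup>2) = (\<Sum>s<t. \<Sum>u<t. expectation (\<lambda>\<omega>. Y s \<omega> * Y u \<omega>))"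
    using int_prod by (simp add: power2_eq_square sum_product)
  also have "\<dots> = (\<Sum>s<t. expectation (\<lambda>\<omega>. Y s \<omega> * Y s \<omega>))"
  proof (intro sum.cong refl)
    fix s assume "s \<in> {..<t}"
    then show "(\<Sum>u<t. expectation (\<lambda>\<omega>. Y s \<omega> * Y u \<omega>)) = expectation (\<lambda>\<omega>. Y s \<omega> * Y s \<omega>)"
      using uncorrelated by (simp add: sum.remove[of "{..<t}" s] sum.neutral)
  qed
  also have "\<dots> \<le> (\<Sum>s<t. 1)"
  proof (intro sum_mono)
    fix s
    have "expectation (\<lambda>\<omega>. Y s \<omega> * Y s \<omega>) \<le> expectation (\<lambda>_. 1::real)"
    proof (rule integral_mono[OF int_prod])
      fix \<omega> assume "\<omega> \<in> space M"
      then have "\<bar>Y s \<omega>\<bar> * \<bar>Y s \<omega>\<bar> \<le> 1"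
        using bound by (intro mult_le_one) auto
      then show "Y s \<omega> * Y s \<omega> \<le> 1"
        by (simp add: abs_mult_self_eq)
    qed simp
    then show "expectation (\<lambda>\<omega>. Y s \<omega> * Y s \<omega>) \<le> 1"
      by (simp add: prob_space)
  qed
  finally show ?thesis
    by simp
qed

lemma (in prob_space) prob_ge_le_second_moment:
  fixes X :: "'a \<Rightarrow> real"
  assumes "random_variable borel X" and "integrable M (\<lambda>\<omega>. (X \<omega>)\<^sup>2)" and "V > 0"
  shows "prob {\<omega>\<in>space M. V \<le> X \<omega>} \<le> expectation (\<lambda>\<omega>. (X \<omega>)\<^sup>2) / V\<^sup>2"
proof -
  have "prob {\<omega>\<in>space M. V \<le> X \<omega>} \<le> prob {\<omega>\<in>space M. V\<^sup>2 \<le> (X \<omega>)\<^sup>2}"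
  proof (rule finite_measure_mono)
    show "{\<omega>\<in>space M. V \<le> X \<omega>} \<subseteq> {\<omega>\<in>space M. V\<^sup>2 \<le> (X \<omega>)\<^sup>2}"
      using \<open>V > 0\<close> by (auto intro: power_mono)
  qed (use assms(1) in measurable)
  also have "\<dots> \<le> expectation (\<lambda>\<omega>. (X \<omega>)\<^sup>2) / V\<^sup>2"
    using \<open>V > 0\<close> by (intro integral_Markov_inequality_measure[OF assms(2) sets.top]) simp_all
  finally show ?thesis .
qed

lemma (in prob_space) prob_sum_indep_centered_le:
  fixes Y :: "nat \<Rightarrow> 'a \<Rightarrow> real"
  assumes meas [measurable]: "\<And>t. random_variable borel (Y t)"
    and bound: "\<And>t \<omega>. \<omega> \<in> space M \<Longrightarrow> \<bar>Y t \<omega>\<bar> \<le> 1"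
    and centered: "\<And>t. expectation (Y t) = 0"
    and indep: "indep_vars (\<lambda>_. borel) Y UNIV"
    and a: "a > 0"
  shows "prob {\<omega>\<in>space M. a \<le> - (\<Sum>\<tau><t. Y \<tau> \<omega>)} \<le> real t / a\<^sup>2"
proof -
  have "integrable M (\<lambda>\<omega>. (- (\<Sum>\<tau><t. Y \<tau> \<omega>))\<^sup>2)"
  proof (rule integrable_const_bound[where B="real t ^ 2"])
    show "AE \<omega> in M. norm ((- (\<Sum>\<tau><t. Y \<tau> \<omega>))\<^sup>2) \<le> real t ^ 2"
    proof (rule AE_I2)
      fix \<omega> assume "\<omega> \<in> space M"
      then have "(\<Sum>\<tau><t. \<bar>Y \<tau> \<omega>\<bar>) \<le> (\<Sum>\<tau><t. 1)"
        using bound by (intro sum_mono) auto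
      then have "\<bar>\<Sum>\<tau><t. Y \<tau> \<omega>\<bar> \<le> real t"
        by (intro order_trans[OF sum_abs]) simp
      then show "norm ((- (\<Sum>\<tau><t. Y \<tau> \<omega>))\<^sup>2) \<le> real t ^ 2"
        using abs_le_square_iff[of "\<Sum>\<tau><t. Y \<tau> \<omega>" "real t"] by simp
    qed
  qed simp
  then have "prob {\<omega>\<in>space M. a \<le> - (\<Sum>\<tau><t. Y \<tau> \<omega>)}
      \<le> expectation (\<lambda>\<omega>. (- (\<Sum>\<tau><t. Y \<tau> \<omega>))\<^sup>2) / a\<^sup>2"
    using a by (intro prob_ge_le_second_moment) simp_all
  also have "\<dots> \<le> real t / a\<^sup>2"
    using expectation_square_sum_indep_le[OF meas bound centered indep, of t]
    by (intro divide_right_mono) simp_all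
  finally show ?thesis .
qed

lemma (in prob_space) prob_sum_below_mean_le:
  fixes X :: "nat \<Rightarrow> 'a \<Rightarrow> real"
  assumes meas: "\<And>\<tau>. random_variable borel (X \<tau>)"
    and range: "\<And>\<tau> \<omega>. \<omega> \<in> space M \<Longrightarrow> X \<tau> \<omega> \<in> {0..1}"
    and mean: "\<And>\<tau>. expectation (X \<tau>) = \<mu>"
    and indep: "indep_vars (\<lambda>_. borel) X UNIV"
    and \<delta>: "\<delta> > 0" and t: "t > 0"
  shows "prob {\<omega>\<in>space M. (\<Sum>\<tau><t. X \<tau> \<omega>) < (\<mu> - \<delta>) * real t} \<le> 1 / (\<delta>\<^sup>2 * real t)"
proof -
  define Y where "Y \<tau> \<omega> = X \<tau> \<omega> - \<mu>" for \<tau> \<omega>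
  have int: "integrable M (X \<tau>)" for \<tau>
    using range by (intro integrable_const_bound[where B=1]) (auto simp: meas)
  have "0 \<le> \<mu>"
    unfolding mean[of 0, symmetric] using range by (intro integral_nonneg_AE AE_I2) auto
  moreover have "\<mu> \<le> 1"
    unfolding mean[of 0, symmetric] using range integral_mono[OF int integrable_const, of 0 1]
    by (simp add: prob_space)
  ultimately have Y_bound: "\<bar>Y \<tau> \<omega>\<bar> \<le> 1" if "\<omega> \<in> space M" for \<tau> \<omega>
    using range[OF that, of \<tau>] by (auto simp: Y_def)
  have Y_meas [measurable]: "random_variable borel (Y \<tau>)" for \<tau>
    using meas unfolding Y_def by measurable
  have "prob {\<omega>\<in>space M. (\<Sum>\<tau><t. X \<tau> \<omega>) < (\<mu> - \<delta>) * real t}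
      \<le> prob {\<omega>\<in>space M. \<delta> * real t \<le> - (\<Sum>\<tau><t. Y \<tau> \<omega>)}"
  proof (rule finite_measure_mono)
    show "{\<omega>\<in>space M. (\<Sum>\<tau><t. X \<tau> \<omega>) < (\<mu> - \<delta>) * real t}
        \<subseteq> {\<omega>\<in>space M. \<delta> * real t \<le> - (\<Sum>\<tau><t. Y \<tau> \<omega>)}"
      by (auto simp: Y_def sum_subtractf algebra_simps)
  qed measurable
  also have "\<dots> \<le> real t / (\<delta> * real t)\<^sup>2"
  proof (rule prob_sum_indep_centered_le[OF Y_meas Y_bound])
    show "expectation (Y \<tau>) = 0" for \<tau>
      using int mean by (simp add: Y_def[abs_def] prob_space)
    show "indep_vars (\<lambda>_. borel) Y UNIV"
      unfolding Y_def by (rule indep_vars_compose2[OF indep]) simp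
  qed (use \<delta> t in simp_all)
  also have "\<dots> = 1 / (\<delta>\<^sup>2 * real t)"
    using t by (simp add: power2_eq_square)
  finally show ?thesis .
qed

lemma (in prob_space) prob_indep_sum_lt_tendsto_0:
  fixes S X :: "nat \<Rightarrow> 'a \<Rightarrow> real"
  assumes S_meas [measurable]: "\<And>t. random_variable borel (S t)"
    and S_rate: "AE \<omega> in M. (\<lambda>t. S t \<omega> / real t) \<longlonglongrightarrow> L" and L: "L < \<mu>"
    and X_meas [measurable]: "\<And>\<tau>. random_variable borel (X \<tau>)"
    and range: "\<And>\<tau> \<omega>. \<omega> \<in> space M \<Longrightarrow> X \<tau> \<omega> \<in> {0..1}"
    and mean: "\<And>\<tau>. expectation (X \<tau>) = \<mu>"
    and indep: "indep_vars (\<lambda>_. borel) X UNIV"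
  shows "(\<lambda>t. prob {\<omega>\<in>space M. (\<Sum>\<tau><t. X \<tau> \<omega>) < S t \<omega>}) \<longlonglongrightarrow> 0"
proof -
  define \<delta> where "\<delta> = (\<mu> - L) / 2"
  have \<delta>: "\<delta> > 0"
    using L by (simp add: \<delta>_def)
  let ?above = "\<lambda>t. {\<omega>\<in>space M. \<not> S t \<omega> \<le> (\<mu> - \<delta>) * real t}"
  let ?below = "\<lambda>t. {\<omega>\<in>space M. (\<Sum>\<tau><t. X \<tau> \<omega>) < (\<mu> - \<delta>) * real t}"
  have above: "(\<lambda>t. prob (?above t)) \<longlonglongrightarrow> 0"
  proof (rule prob_tendsto_0_if_AE_eventually)
    show "AE \<omega> in M. eventually (\<lambda>t. S t \<omega> \<le> (\<mu> - \<delta>) * real t) sequentially"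
      using S_rate
    proof eventually_elim
      case (elim \<omega>)
      have "L < \<mu> - \<delta>"
        using L by (simp add: \<delta>_def field_simps)
      from order_tendstoD(2)[OF elim this] eventually_gt_at_top[of 0]
      show ?case
        by eventually_elim (simp add: pos_divide_less_eq less_imp_le)
    qed
  qed measurable
  have below: "(\<lambda>t. prob (?below t)) \<longlonglongrightarrow> 0"
  proof (rule tendsto_sandwich[where f="\<lambda>_. 0" and h="\<lambda>t. 1 / (\<delta>\<^sup>2 * real t)"])
    show "eventually (\<lambda>t. prob (?below t) \<le> 1 / (\<delta>\<^sup>2 * real t)) sequentially"
      using eventually_gt_at_top[of 0]
      by eventually_elim (rule prob_sum_below_mean_le[OF X_meas range mean indep \<delta>])
    show "(\<lambda>t. 1 / (\<delta>\<^sup>2 * real t)) \<longlonglongrightarrow> 0"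
      using lim_const_over_n[of "1 / \<delta>\<^sup>2"] by simp
  qed auto
  show ?thesis
  proof (rule tendsto_sandwich[where f="\<lambda>_. 0", OF _ _ tendsto_const])
    show "eventually (\<lambda>t. prob {\<omega>\<in>space M. (\<Sum>\<tau><t. X \<tau> \<omega>) < S t \<omega>}
        \<le> prob (?above t) + prob (?below t)) sequentially"
    proof (intro always_eventually allI)
      fix t
      have "prob {\<omega>\<in>space M. (\<Sum>\<tau><t. X \<tau> \<omega>) < S t \<omega>} \<le> prob (?above t \<union> ?below t)"
        by (intro finite_measure_mono) auto
      also have "\<dots> \<le> prob (?above t) + prob (?below t)"
        by (intro measure_Un_le) auto
      finally show "prob {\<omega>\<in>space M. (\<Sum>\<tau><t. X \<tau> \<omega>) < S t \<omega>} \<le> prob (?above t) + prob (?below t)" .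
    qed
    show "(\<lambda>t. prob (?above t) + prob (?below t)) \<longlonglongrightarrow> 0"
      using tendsto_add[OF above below] by simp
  qed simp
qed

section \<open>Stability of the switch\<close>

lemma capacity_region_node_load_less:
  assumes cap: "capacity_region K p 1 (\<lambda>i j. lam i j + \<epsilon>)" and \<epsilon>: "\<epsilon> > 0"
    and n: "n \<in> nodes K" and m: "m \<in> nodes K" "n \<noteq> m"
  shows "(\<Sum>k\<in>nodes K - {n}. lam n k) < p n"
proof -
  from cap obtain f where f_sym: "\<forall>i j. f i j = f j i \<and> f i j \<ge> 0"
    and f_load: "\<forall>j\<in>nodes K. (\<Sum>i\<in>nodes K - {j}. f i j) \<le> p j"
    and f_rate: "\<forall>i\<in>nodes K. \<forall>j\<in>nodes K. i \<noteq> j \<longrightarrow> lam i j + \<epsilon> \<le> 1 * f i j"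
    unfolding capacity_region_def by blast
  have "(\<Sum>k\<in>nodes K - {n}. lam n k) < (\<Sum>k\<in>nodes K - {n}. lam n k + \<epsilon>)"
    using m \<epsilon> by (intro sum_strict_mono_ex1) auto
  also have "\<dots> \<le> (\<Sum>k\<in>nodes K - {n}. f k n)"
    using f_rate f_sym n by (intro sum_mono) auto
  also have "\<dots> \<le> p n"
    using f_load n by blast
  finally show ?thesis .
qed

lemma (in prob_space) expectation_Bernoulli:
  assumes "X \<in> measurable M (count_space UNIV)" and "\<And>\<omega>. \<omega> \<in> space M \<Longrightarrow> X \<omega> \<le> (1::nat)"
  shows "expectation (\<lambda>\<omega>. real (X \<omega>)) = prob {\<omega>\<in>space M. X \<omega> = 1}"
proof -
  have "expectation (\<lambda>\<omega>. real (X \<omega>)) = expectation (indicator {\<omega>\<in>space M. X \<omega> = 1})"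
    using assms(2) by (intro Bochner_Integration.integral_cong refl) (fastforce simp: indicator_def)
  also have "\<dots> = prob {\<omega>\<in>space M. X \<omega> = 1}"
    using assms(1) by simp
  finally show ?thesis .
qed

lemma (in prob_space) prob_demand_uncovered_tendsto_0:
  fixes A :: "nat \<Rightarrow> nat \<Rightarrow> nat \<Rightarrow> 'a \<Rightarrow> nat" and C :: "nat \<Rightarrow> nat \<Rightarrow> 'a \<Rightarrow> nat"
  assumes C_meas [measurable]: "\<And>t. C t n \<in> measurable M (count_space UNIV)"
    and C_01: "\<And>t \<omega>. \<omega> \<in> space M \<Longrightarrow> C t n \<omega> \<le> 1"
    and C_mean: "\<And>t. prob {\<omega>\<in>space M. C t n \<omega> = 1} = p n"
    and C_iid: "indep_vars (\<lambda>_. count_space UNIV) (\<lambda>t. C t n) UNIV"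
    and A_meas [measurable]: "\<And>t k. A t n k \<in> measurable M (count_space UNIV)"
    and A_rate: "\<And>k. k \<in> nodes K \<Longrightarrow> n \<noteq> k \<Longrightarrow>
                   AE \<omega> in M. (\<lambda>t. (\<Sum>\<tau><t. real (A \<tau> n k \<omega>)) / real t) \<longlonglongrightarrow> lam n k"
    and load: "(\<Sum>k\<in>nodes K - {n}. lam n k) < p n"
  shows "(\<lambda>t. prob {\<omega>\<in>space M. \<not> demand_covered K (\<lambda>t i j. A t i j \<omega>) (\<lambda>t i. C t i \<omega>) t n}) \<longlonglongrightarrow> 0"
proof -
  define S where "S t \<omega> = (\<Sum>\<tau><t. \<Sum>k\<in>nodes K - {n}. real (A \<tau> n k \<omega>))" for t \<omega>
  have "AE \<omega> in M. \<forall>k\<in>nodes K - {n}. (\<lambda>t. (\<Sum>\<tau><t. real (A \<tau> n k \<omega>)) / real t) \<longlonglongrightarrow> lam n k"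
    using A_rate by (intro AE_finite_allI) auto
  then have S_rate: "AE \<omega> in M. (\<lambda>t. S t \<omega> / real t) \<longlonglongrightarrow> (\<Sum>k\<in>nodes K - {n}. lam n k)"
  proof eventually_elim
    case (elim \<omega>)
    have "S t \<omega> / real t = (\<Sum>k\<in>nodes K - {n}. (\<Sum>\<tau><t. real (A \<tau> n k \<omega>)) / real t)" for t
      unfolding S_def by (subst sum.swap) (simp add: sum_divide_distrib)
    then show ?case
      using elim by (auto intro!: tendsto_sum)
  qed
  have "(\<lambda>t. prob {\<omega>\<in>space M. (\<Sum>\<tau><t. real (C \<tau> n \<omega>)) < S t \<omega>}) \<longlonglongrightarrow> 0"
  proof (rule prob_indep_sum_lt_tendsto_0[OF _ S_rate load])
    show "expectation (\<lambda>\<omega>. real (C \<tau> n \<omega>)) = p n" for \<tau>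
      using expectation_Bernoulli[OF C_meas C_01] C_mean by simp
    show "indep_vars (\<lambda>_. borel) (\<lambda>\<tau> \<omega>. real (C \<tau> n \<omega>)) UNIV"
      by (rule indep_vars_compose2[OF C_iid]) simp
  qed (use C_01 in \<open>auto simp: S_def\<close>)
  moreover have "{\<omega>\<in>space M. \<not> demand_covered K (\<lambda>t i j. A t i j \<omega>) (\<lambda>t i. C t i \<omega>) t n}
      = {\<omega>\<in>space M. (\<Sum>\<tau><t. real (C \<tau> n \<omega>)) < S t \<omega>}" for t
    unfolding demand_covered_iff_real S_def by (simp add: not_le)
  ultimately show ?thesis
    by (simp only:)
qed

lemma (in prob_space) expectation_le_if_AE_cond_exp_le:
  assumes "subalgebra M F" and "integrable M g"
    and "AE \<omega> in M. real_cond_exp M F g \<omega> \<le> B"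
  shows "expectation g \<le> B"
proof -
  interpret finite_measure_subalgebra M F
    by unfold_locales (fact assms(1))
  have "expectation g = expectation (real_cond_exp M F g)"
    using real_cond_exp_int(2)[OF assms(2)] by simp
  also have "\<dots> \<le> expectation (\<lambda>_. B)"
    using assms(3) real_cond_exp_int(1)[OF assms(2)] by (intro integral_mono_AE) auto
  also have "\<dots> = B"
    by (simp add: prob_space)
  finally show ?thesis .
qed

lemma subalgebra_hist_alg:
  assumes "\<And>t i j. A t i j \<in> measurable M (count_space UNIV)"
    and "\<And>t i. C t i \<in> measurable M (count_space UNIV)"
  shows "subalgebra M (hist_alg M K A C t)"
proof -
  let ?G = "{A \<tau> i j -` B \<inter> space M | \<tau> i j B. \<tau> < t \<and> i \<in> nodes K \<and> j \<in> nodes K}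
      \<union> {C \<tau> i -` B \<inter> space M | \<tau> i B. \<tau> < t \<and> i \<in> nodes K}"
  have "?G \<subseteq> sets M"
    using measurable_sets[OF assms(1)] measurable_sets[OF assms(2)] by auto
  moreover from this have "?G \<subseteq> Pow (space M)"
    using sets.sets_into_space by blast
  ultimately show ?thesis
    unfolding subalgebra_def hist_alg_def
    by (simp add: sets_measure_of space_measure_of_conv sets.sigma_sets_subset)
qed

lemma (in prob_space) switch_stable_if_tail_bound:
  assumes "\<And>i j. i \<in> nodes K \<Longrightarrow> j \<in> nodes K \<Longrightarrow> i \<noteq> j \<Longrightarrow> \<exists>h. h \<longlonglongrightarrow> 0 \<and>
             (\<forall>V>0. \<forall>\<tau>. prob {\<omega>\<in>space M. V < real (U (Suc \<tau>) i j \<omega>)} \<le> B / V\<^sup>2 + h \<tau>)"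
  shows "switch_stable M K U"
  unfolding switch_stable_def
proof (intro ballI impI)
  fix i j assume "i \<in> nodes K" "j \<in> nodes K" "i \<noteq> j"
  with assms obtain h where h: "h \<longlonglongrightarrow> 0"
    and tail: "\<And>V \<tau>. V > 0 \<Longrightarrow> prob {\<omega>\<in>space M. V < real (U (Suc \<tau>) i j \<omega>)} \<le> B / V\<^sup>2 + h \<tau>"
    by blast
  let ?F = "\<lambda>V. limsup (\<lambda>t. ereal ((\<Sum>\<tau><t. prob {\<omega>\<in>space M. V < real (U \<tau> i j \<omega>)}) / real t))"
  have upper: "?F V \<le> ereal (B / V\<^sup>2)" if "V > 0" for V
    using tail[OF that] by (intro limsup_Cesaro_mean_le[OF _ _ h]) auto
  have lower: "0 \<le> ?F V" for V
    by (intro le_Limsup always_eventually allI) (auto intro!: divide_nonneg_nonneg sum_nonneg)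
  have "((\<lambda>V::real. B / V\<^sup>2) \<longlongrightarrow> 0) at_top"
    by (intro real_tendsto_divide_at_top[OF tendsto_const] filterlim_pow_at_top[OF _ filterlim_ident]) simp
  then have bound_lim: "((\<lambda>V. ereal (B / V\<^sup>2)) \<longlongrightarrow> 0) at_top"
    by (simp add: zero_ereal_def tendsto_ereal)
  show "(?F \<longlongrightarrow> 0) at_top"
  proof (rule tendsto_sandwich[OF _ _ tendsto_const bound_lim])
    show "eventually (\<lambda>V. 0 \<le> ?F V) at_top"
      using lower by simp
    show "eventually (\<lambda>V. ?F V \<le> ereal (B / V\<^sup>2)) at_top"
      using eventually_gt_at_top[of 0] by eventually_elim (fact upper)
  qed
qed

lemma (in prob_space) switch_stable_if_fresh_arrivals:
  fixes A :: "nat \<Rightarrow> nat \<Rightarrow> nat \<Rightarrow> 'a \<Rightarrow> nat"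
  assumes A_meas: "\<And>t i j. A t i j \<in> measurable M (count_space UNIV)"
    and A_int: "\<And>t i j. integrable M (\<lambda>\<omega>. (real (A t i j \<omega>))\<^sup>2)"
    and A_mom: "\<And>t i j. i \<in> nodes K \<Longrightarrow> j \<in> nodes K \<Longrightarrow> i \<noteq> j \<Longrightarrow>
                  expectation (\<lambda>\<omega>. (real (A t i j \<omega>))\<^sup>2) \<le> B"
    and N_meas [measurable]: "\<And>n t. N n t \<in> events"
    and N_lim: "\<And>i j. i \<in> nodes K \<Longrightarrow> j \<in> nodes K \<Longrightarrow> i \<noteq> j \<Longrightarrow> (\<lambda>t. prob (N i t)) \<longlonglongrightarrow> 0"
    and fresh: "\<And>t i j \<omega>. i \<in> nodes K \<Longrightarrow> j \<in> nodes K \<Longrightarrow> i \<noteq> j \<Longrightarrow> \<omega> \<in> space M \<Longrightarrow>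
                  \<omega> \<notin> N i t \<Longrightarrow> \<omega> \<notin> N j t \<Longrightarrow> U (Suc t) i j \<omega> = A t i j \<omega>"
  shows "switch_stable M K U"
proof (rule switch_stable_if_tail_bound)
  fix i j assume ij: "i \<in> nodes K" "j \<in> nodes K" "i \<noteq> j"
  have A_real [measurable]: "random_variable borel (\<lambda>\<omega>. real (A t i j \<omega>))" for t
    using A_meas by (rule measurable_compose) simp
  show "\<exists>h. h \<longlonglongrightarrow> 0 \<and>
      (\<forall>V>0. \<forall>\<tau>. prob {\<omega>\<in>space M. V < real (U (Suc \<tau>) i j \<omega>)} \<le> B / V\<^sup>2 + h \<tau>)"
  proof (intro exI conjI allI impI)
    show "(\<lambda>\<tau>. prob (N i \<tau>) + prob (N j \<tau>)) \<longlonglongrightarrow> 0"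
      using tendsto_add[OF N_lim[OF ij] N_lim[OF ij(2,1) ij(3)[symmetric]]] by simp
    fix V :: real and \<tau> assume V: "V > 0"
    let ?large = "{\<omega>\<in>space M. V \<le> real (A \<tau> i j \<omega>)}"
    have "prob {\<omega>\<in>space M. V < real (U (Suc \<tau>) i j \<omega>)} \<le> prob (?large \<union> N i \<tau> \<union> N j \<tau>)"
    proof (rule finite_measure_mono)
      show "{\<omega>\<in>space M. V < real (U (Suc \<tau>) i j \<omega>)} \<subseteq> ?large \<union> N i \<tau> \<union> N j \<tau>"
        using fresh[OF ij] by fastforce
    qed measurable
    also have "\<dots> \<le> prob (?large \<union> N i \<tau>) + prob (N j \<tau>)"
      by (rule measure_Un_le) measurable
    also have "prob (?large \<union> N i \<tau>) \<le> prob ?large + prob (N i \<tau>)"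
      by (rule measure_Un_le) measurable
    also have "prob ?large \<le> expectation (\<lambda>\<omega>. (real (A \<tau> i j \<omega>))\<^sup>2) / V\<^sup>2"
      by (rule prob_ge_le_second_moment[OF A_real A_int V])
    also have "\<dots> \<le> B / V\<^sup>2"
      by (intro divide_right_mono A_mom[OF ij]) simp
    finally show "prob {\<omega>\<in>space M. V < real (U (Suc \<tau>) i j \<omega>)} \<le> B / V\<^sup>2 + (prob (N i \<tau>) + prob (N j \<tau>))"
      by simp
  qed
qed

theorem theorem5:
  fixes M :: "'a measure" and K :: nat
    and p :: "nat \<Rightarrow> real" and lam :: "nat \<Rightarrow> nat \<Rightarrow> real" and Amax :: real
    and C :: "nat \<Rightarrow> nat \<Rightarrow> 'a \<Rightarrow> nat"
    and A :: "nat \<Rightarrow> nat \<Rightarrow> nat \<Rightarrow> 'a \<Rightarrow> nat"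
    and F :: "nat \<Rightarrow> nat \<Rightarrow> nat \<Rightarrow> 'a \<Rightarrow> nat"
  assumes P: "prob_space M"
    (* switch-node link generation: independent Bernoulli(p_i) processes, i.i.d. in time *)
    and C_meas: "\<And>t i. C t i \<in> measurable M (count_space UNIV)"
    and C_01: "\<And>t i \<omega>. \<omega> \<in> space M \<Longrightarrow> C t i \<omega> \<le> 1"
    and C_mean: "\<And>t i. i \<in> nodes K \<Longrightarrow> measure M {\<omega>\<in>space M. C t i \<omega> = 1} = p i"
    and C_iid: "\<And>i. i \<in> nodes K \<Longrightarrow>
                  prob_space.indep_vars M (\<lambda>_. count_space UNIV) (\<lambda>t. C t i) UNIV"
    (* requests *)
    and A_meas: "\<And>t i j. A t i j \<in> measurable M (count_space UNIV)"
    and A_sym: "\<And>t i j \<omega>. A t i j \<omega> = A t j i \<omega>"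
    and A_stat: "\<And>i j. (i, j) \<in> node_pairs K \<Longrightarrow> stationary_proc M (\<lambda>t. A t i j)"
    and A_erg: "\<And>i j. (i, j) \<in> node_pairs K \<Longrightarrow> ergodic_proc M (\<lambda>t. A t i j)"
    and A_rate: "\<And>i j. i \<in> nodes K \<Longrightarrow> j \<in> nodes K \<Longrightarrow> i \<noteq> j \<Longrightarrow>
                   AE \<omega> in M. (\<lambda>t. (\<Sum>\<tau><t. real (A \<tau> i j \<omega>)) / real t) \<longlonglongrightarrow> lam i j"
    and A_int: "\<And>t i j. integrable M (\<lambda>\<omega>. (real (A t i j \<omega>))\<^sup>2)"
    and A_mom: "\<And>t i j. i \<in> nodes K \<Longrightarrow> j \<in> nodes K \<Longrightarrow> i \<noteq> j \<Longrightarrow>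
                  AE \<omega> in M. real_cond_exp M (hist_alg M K A C t) (\<lambda>\<omega>. (real (A t i j \<omega>))\<^sup>2) \<omega> \<le> Amax\<^sup>2"
    (* mutual independence of the request processes (per pair) and the generation processes *)
    and indep: "prob_space.indep_vars M (\<lambda>_. seq_space) (all_procs A C)
                  (Inl ` node_pairs K \<union> Inr ` nodes K)"
    (* capacity condition with slack epsilon, swap success probability q = 1 *)
    and slack: "\<exists>\<epsilon>>0. capacity_region K p 1 (\<lambda>i j. lam i j + \<epsilon>)"
    (* an arbitrary on-demand protocol, choosing swaps based on the history *)
    and F_adapted: "\<And>t i j. F t i j \<in> measurable (hist_alg M K A C t) (count_space UNIV)"
    and F_od: "\<And>t \<omega>. \<omega> \<in> space M \<Longrightarrow>
                 on_demand K
                   (Uq K (\<lambda>t i j. A t i j \<omega>) (\<lambda>t i. C t i \<omega>) (\<lambda>t i j. F t i j \<omega>) t)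
                   (E0q K (\<lambda>t i j. A t i j \<omega>) (\<lambda>t i. C t i \<omega>) (\<lambda>t i j. F t i j \<omega>) t)
                   (\<lambda>i j. F t i j \<omega>)"
  shows "switch_stable M K
           (\<lambda>t i j \<omega>. Uq K (\<lambda>t i j. A t i j \<omega>) (\<lambda>t i. C t i \<omega>) (\<lambda>t i j. F t i j \<omega>) t i j)"
proof -
  interpret prob_space M
    by (fact P)
  \<comment> \<open>Bernoulli generations at each node.\<close>
  from slack obtain \<epsilon> where \<epsilon>: "\<epsilon> > 0" and cap: "capacity_region K p 1 (\<lambda>i j. lam i j + \<epsilon>)"
    by blast
  define uncovered where "uncovered n t =
    {\<omega>\<in>space M. \<not> demand_covered K (\<lambda>t i j. A t i j \<omega>) (\<lambda>t i. C t i \<omega>) t n}" for n t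
  have [measurable]: "(\<lambda>\<omega>. real (A t i j \<omega>)) \<in> borel_measurable M"
    "(\<lambda>\<omega>. real (C t i \<omega>)) \<in> borel_measurable M" for t i j
    using A_meas C_meas by (auto intro: measurable_compose)
  show ?thesis
  proof (rule switch_stable_if_fresh_arrivals[OF A_meas A_int, where N = uncovered])
    show "expectation (\<lambda>\<omega>. (real (A t i j \<omega>))\<^sup>2) \<le> Amax\<^sup>2"
      if "i \<in> nodes K" "j \<in> nodes K" "i \<noteq> j" for t i j
      using subalgebra_hist_alg[OF A_meas C_meas] A_int A_mom[OF that]
      by (rule expectation_le_if_AE_cond_exp_le)
    show "uncovered n t \<in> events" for n t
      unfolding uncovered_def demand_covered_iff_real by measurable
    show "(\<lambda>t. prob (uncovered i t)) \<longlonglongrightarrow> 0" if "i \<in> nodes K" "j \<in> nodes K" "i \<noteq> j" for i j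
      unfolding uncovered_def
      using C_meas C_01 C_mean[OF that(1)] C_iid[OF that(1)] A_meas A_rate[OF that(1)]
        capacity_region_node_load_less[OF cap \<epsilon> that]
      by (rule prob_demand_uncovered_tendsto_0)
    show "Uq K (\<lambda>t i j. A t i j \<omega>) (\<lambda>t i. C t i \<omega>) (\<lambda>t i j. F t i j \<omega>) (Suc t) i j = A t i j \<omega>"
      if "i \<in> nodes K" "j \<in> nodes K" "i \<noteq> j" "\<omega> \<in> space M"
        and "\<omega> \<notin> uncovered i t" "\<omega> \<notin> uncovered j t" for t i j \<omega>
      using that by (intro on_demand_Uq_Suc_eq_arrivals[OF F_od A_sym]) (auto simp: uncovered_def)
  qed
qed

end
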